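(* Let $n\ge 3$ and let $\mathcal{H}$ be the associating hypergraph on $M(D_n,2)$. Then its matching polynomial is $$M(\mathcal{H},w)=\sum_{k=0}^{\,n+\lfloor n/3\rfloor} a_k\, w_1^{\,4n-3k}\, w_2^{\,k},$$ where $a_k$ is the number of $k$-matchings of $\mathcal{H}$, and $a_k\neq 0$ for $k=n+\lfloor n/3\rfloor$.
   Context: $D_n=\langle x,y\mid x^n=y^2=1,\ xy=yx^{-1}\rangle$. $M(D_n,2)=\{(g,\alpha): g\in D_n,\ \alpha\in\mathbb{Z}_2\}$ with $(g_1,\alpha_1)\circ(g_2,\alpha_2)=(g_1^{1-\alpha_2} g_2^{(-1)^{\alpha_1}} g_1^{\alpha_2},\ \alpha_1+\alpha_2)$. The associating hypergraph $\mathcal{H}$ has vertex set $M(D_n,2)$ ($4n$ vertices), and a 3-element set $\{a,b,c\}$ of distinct elements is a hyperedge when $(a\circ b)\circ c=a\circ(b\circ c)$. A $k$-matching is a set of $k$ pairwise vertex-disjoint hyperedges. For a 3-uniform hypergraph with vertex set $V$, the matching polynomial is $M(\mathcal{H},w)=\sum_{M} w_1^{|V|-3|M|} w_2^{|M|}$, the sum over all matchings $M$ (including the empty one), where $w_1,w_2$ are indeterminates (weights of unmatched vertices and of matching hyperedges). *)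

theory Defs
  imports Main
begin

text \<open>Dihedral group D_n = <x,y | x^n = y^2 = 1, xy = yx^{-1}>, modelled concretely:
  the pair (i, s) with i < n, s < 2 stands for x^i y^s.
  Then x^i y^s * x^j y^t = x^(i + (-1)^s j) y^(s+t).\<close>

type_synonym dih = "nat \<times> nat"

definition dih_carrier :: "nat \<Rightarrow> dih set" where
  "dih_carrier n = {0..<n} \<times> {0..<2}"

fun dmul :: "nat \<Rightarrow> dih \<Rightarrow> dih \<Rightarrow> dih" where
  "dmul n (i, s) (j, t) =
     ((if s = 0 then i + j else i + (n - j mod n)) mod n, (s + t) mod 2)"

fun dinv :: "nat \<Rightarrow> dih \<Rightarrow> dih" where
  "dinv n (i, s) = (if s = 0 then ((n - i mod n) mod n, 0) else (i, s))"

definition dpow :: "nat \<Rightarrow> dih \<Rightarrow> nat \<Rightarrow> dih" where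
  "dpow n g a = (if a = 0 then (0, 0) else g)"

definition dsgn :: "nat \<Rightarrow> dih \<Rightarrow> nat \<Rightarrow> dih" where
  "dsgn n g a = (if a = 0 then g else dinv n g)"

definition M_carrier :: "nat \<Rightarrow> (dih \<times> nat) set" where
  "M_carrier n = dih_carrier n \<times> {0..<2}"

fun mop :: "nat \<Rightarrow> dih \<times> nat \<Rightarrow> dih \<times> nat \<Rightarrow> dih \<times> nat" where
  "mop n (g1, a1) (g2, a2) =
     (dmul n (dmul n (dpow n g1 (1 - a2)) (dsgn n g2 a1)) (dpow n g1 a2), (a1 + a2) mod 2)"

definition hyperedges :: "nat \<Rightarrow> (dih \<times> nat) set set" where
  "hyperedges n = {E. \<exists>a b c. a \<in> M_carrier n \<and> b \<in> M_carrier n \<and> c \<in> M_carrier n \<and>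
       distinct [a, b, c] \<and> E = {a, b, c} \<and> mop n (mop n a b) c = mop n a (mop n b c)}"

definition matchings :: "nat \<Rightarrow> (dih \<times> nat) set set set" where
  "matchings n = {M. M \<subseteq> hyperedges n \<and> (\<forall>e\<in>M. \<forall>f\<in>M. e \<noteq> f \<longrightarrow> e \<inter> f = {})}"

definition num_matchings :: "nat \<Rightarrow> nat \<Rightarrow> nat" where
  "num_matchings n k = card {M \<in> matchings n. card M = k}"

definition matching_poly :: "nat \<Rightarrow> 'a::comm_ring_1 \<Rightarrow> 'a \<Rightarrow> 'a" where
  "matching_poly n w1 w2 =
     (\<Sum>M\<in>matchings n. w1 ^ (card (M_carrier n) - 3 * card M) * w2 ^ card M)"

end

theory Submission imports Defs begin

text \<open>Three subsets of \<open>M(D\<^sub>n,2)\<close> are associative, so any three distinct elements of one of them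
  form a hyperedge: the rotations \<open>x\<^sup>i\<close> with either \<open>\<alpha>\<close>; the copy \<open>D\<^sub>n \<times> {0}\<close> of the group;
  and the elements \<open>(x\<^sup>i, 0)\<close>, \<open>(x\<^sup>i y, 1)\<close>. Each element except \<open>(x\<^sup>i, 0)\<close> lies in exactly
  one of them, and distributing the \<open>n\<close> elements \<open>(x\<^sup>i, 0)\<close> among the three classes yields
  disjoint sets of sizes \<open>n + p\<close>, \<open>n + q\<close>, \<open>2n - p - q\<close> with \<open>p + q \<le> 2\<close> chosen so that the
  remainders mod 3 add up to less than 3. Greedily cutting each set into triples then gives
  \<open>\<lfloor>4n/3\<rfloor> = n + \<lfloor>n/3\<rfloor>\<close> disjoint hyperedges, the most that \<open>4n\<close> vertices allow.\<close>

text \<open>\<open>dih_of_int n z s\<close> is \<open>x\<^sup>z y\<^sup>s\<close> with an integer exponent \<open>z\<close>, which turns the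
  truncated natural-number arithmetic of \<open>dmul\<close> into arithmetic in \<open>\<int>\<close>.\<close>

definition dih_of_int :: "nat \<Rightarrow> int \<Rightarrow> nat \<Rightarrow> dih" where
  "dih_of_int n z s = (nat (z mod int n), s)"

lemma dmul_dih_of_int:
  assumes "n > 0"
  shows "dmul n (dih_of_int n z s) (dih_of_int n w t) =
           dih_of_int n (if s = 0 then z + w else z - w) ((s + t) mod 2)"
proof (cases "s = 0")
  case True
  have "int ((nat (z mod int n) + nat (w mod int n)) mod n) = (z + w) mod int n"
    using assms by (simp add: zmod_int mod_simps)
  then show ?thesis using True unfolding dih_of_int_def by (simp add: nat_eq_iff2 del: of_nat_mod)
next
  case False
  have "nat (w mod int n) < n" using assms by (simp add: nat_less_iff)
  then have "int ((nat (z mod int n) + (n - nat (w mod int n) mod n)) mod n)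
        = ((z mod int n - w mod int n) + int n) mod int n"
    using assms by (simp add: zmod_int of_nat_diff algebra_simps)
  also have "\<dots> = (z - w) mod int n" by (simp add: mod_diff_eq)
  finally show ?thesis using False unfolding dih_of_int_def by (simp add: nat_eq_iff2 del: of_nat_mod)
qed

lemma dinv_dih_of_int:
  assumes "n > 0"
  shows "dinv n (dih_of_int n z s) = (if s = 0 then dih_of_int n (- z) 0 else dih_of_int n z s)"
proof -
  have "nat (z mod int n) \<le> n" using assms by (simp add: nat_le_iff order.strict_implies_order)
  then have "int ((n - nat (z mod int n) mod n) mod n) = (int n - z mod int n) mod int n"
    using assms by (simp add: zmod_int of_nat_diff)
  also have "\<dots> = (- z) mod int n" by (simp add: mod_simps)
  finally show ?thesis unfolding dih_of_int_def by (simp add: nat_eq_iff2 del: of_nat_mod)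
qed

lemma dpow_dih_of_int: "dpow n g a = (if a = 0 then dih_of_int n 0 0 else g)"
  unfolding dpow_def dih_of_int_def by simp

lemma M_carrier_dih_of_int:
  assumes "x \<in> M_carrier n"
  obtains z s a where "x = (dih_of_int n z s, a)" "s < 2" "a < 2"
proof -
  obtain i s a where "x = ((i, s), a)" "i < n" "s < 2" "a < 2"
    using assms unfolding M_carrier_def dih_carrier_def by auto
  then show thesis by (intro that[of "int i" s a]) (simp_all add: dih_of_int_def)
qed

definition assoc_on :: "nat \<Rightarrow> (dih \<times> nat) set \<Rightarrow> bool" where
  "assoc_on n S \<longleftrightarrow> (\<forall>x\<in>S. \<forall>y\<in>S. \<forall>z\<in>S. mop n (mop n x y) z = mop n x (mop n y z))"

lemma assoc_on_subset: "assoc_on n S \<Longrightarrow> T \<subseteq> S \<Longrightarrow> assoc_on n T"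
  unfolding assoc_on_def by blast

lemma assoc_on_by_type:
  assumes "n > 0"
    and "\<And>z1 z2 z3 s1 s2 s3 a1 a2 a3. P s1 a1 \<Longrightarrow> P s2 a2 \<Longrightarrow> P s3 a3 \<Longrightarrow>
           s1 < 2 \<Longrightarrow> s2 < 2 \<Longrightarrow> s3 < 2 \<Longrightarrow> a1 < 2 \<Longrightarrow> a2 < 2 \<Longrightarrow> a3 < 2 \<Longrightarrow>
           mop n (mop n (dih_of_int n z1 s1, a1) (dih_of_int n z2 s2, a2)) (dih_of_int n z3 s3, a3) =
           mop n (dih_of_int n z1 s1, a1) (mop n (dih_of_int n z2 s2, a2) (dih_of_int n z3 s3, a3))"
  shows "assoc_on n {x \<in> M_carrier n. P (snd (fst x)) (snd x)}" (is "assoc_on n ?S")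
  unfolding assoc_on_def
proof (intro ballI)
  fix x y z assume x: "x \<in> ?S" and y: "y \<in> ?S" and z: "z \<in> ?S"
  obtain z1 s1 a1 where "x = (dih_of_int n z1 s1, a1)" "s1 < 2" "a1 < 2"
    using x by (blast elim: M_carrier_dih_of_int)
  moreover obtain z2 s2 a2 where "y = (dih_of_int n z2 s2, a2)" "s2 < 2" "a2 < 2"
    using y by (blast elim: M_carrier_dih_of_int)
  moreover obtain z3 s3 a3 where "z = (dih_of_int n z3 s3, a3)" "s3 < 2" "a3 < 2"
    using z by (blast elim: M_carrier_dih_of_int)
  ultimately show "mop n (mop n x y) z = mop n x (mop n y z)"
    using x y z assms(2) by (simp add: dih_of_int_def del: mop.simps)
qed

lemma assoc_on_rotations: "n > 0 \<Longrightarrow> assoc_on n {x \<in> M_carrier n. snd (fst x) = 0}"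
  by (rule assoc_on_by_type, assumption, unfold less_2_cases_iff, elim disjE)
    (simp_all add: dpow_dih_of_int dsgn_def dinv_dih_of_int dmul_dih_of_int algebra_simps)

lemma assoc_on_alpha_zero: "n > 0 \<Longrightarrow> assoc_on n {x \<in> M_carrier n. snd x = 0}"
  by (rule assoc_on_by_type, assumption, unfold less_2_cases_iff, elim disjE)
    (simp_all add: dpow_dih_of_int dsgn_def dinv_dih_of_int dmul_dih_of_int algebra_simps)

lemma assoc_on_reflection_iff_alpha: "n > 0 \<Longrightarrow> assoc_on n {x \<in> M_carrier n. snd (fst x) = snd x}"
  by (rule assoc_on_by_type, assumption, unfold less_2_cases_iff, elim disjE)
    (simp_all add: dpow_dih_of_int dsgn_def dinv_dih_of_int dmul_dih_of_int algebra_simps)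

lemma finite_M_carrier: "finite (M_carrier n)"
  unfolding M_carrier_def dih_carrier_def by simp

lemma card_M_carrier: "card (M_carrier n) = 4 * n"
  unfolding M_carrier_def dih_carrier_def by (simp add: card_cartesian_product)

lemma hyperedgesD:
  assumes "e \<in> hyperedges n"
  shows "e \<subseteq> M_carrier n" "card e = 3"
proof -
  obtain a b c where "a \<in> M_carrier n" "b \<in> M_carrier n" "c \<in> M_carrier n"
    "distinct [a, b, c]" "e = {a, b, c}"
    using assms unfolding hyperedges_def by blast
  then show "e \<subseteq> M_carrier n" "card e = 3" by simp_all
qed

lemma hyperedgesI:
  assumes "e \<subseteq> M_carrier n" "card e = 3" "assoc_on n e"
  shows "e \<in> hyperedges n"
proof -
  obtain a b c where "e = {a, b, c}" "a \<noteq> b" "b \<noteq> c" "a \<noteq> c"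
    using assms(2) unfolding card_3_iff by blast
  then show ?thesis
    using assms(1,3) unfolding hyperedges_def assoc_on_def
    by (intro CollectI exI[of _ a] exI[of _ b] exI[of _ c]) simp
qed

lemma finite_hyperedges: "finite (hyperedges n)"
proof (rule finite_subset)
  show "hyperedges n \<subseteq> Pow (M_carrier n)" using hyperedgesD(1) by blast
qed (simp add: finite_M_carrier)

lemma finite_matchings: "finite (matchings n)"
proof (rule finite_subset)
  show "matchings n \<subseteq> Pow (hyperedges n)" unfolding matchings_def by blast
qed (simp add: finite_hyperedges)

lemma matchingsI:
  assumes "M \<subseteq> hyperedges n" "\<And>e f. e \<in> M \<Longrightarrow> f \<in> M \<Longrightarrow> e \<noteq> f \<Longrightarrow> e \<inter> f = {}"
  shows "M \<in> matchings n"
  using assms unfolding matchings_def by blast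

lemma matchingsD:
  assumes "M \<in> matchings n"
  shows matching_hyperedge: "e \<in> M \<Longrightarrow> e \<in> hyperedges n"
    and matching_disjoint: "e \<in> M \<Longrightarrow> f \<in> M \<Longrightarrow> e \<noteq> f \<Longrightarrow> e \<inter> f = {}"
  using assms unfolding matchings_def by blast+

lemma finite_matching: "M \<in> matchings n \<Longrightarrow> finite M"
  unfolding matchings_def using finite_hyperedges finite_subset by blast

lemma card_Union_matching:
  assumes "M \<in> matchings n"
  shows "card (\<Union>M) = 3 * card M"
proof -
  have sub: "M \<subseteq> hyperedges n" and "pairwise disjnt M"
    using assms unfolding matchings_def pairwise_def disjnt_def by auto
  moreover have "finite e" if "e \<in> M" for e
    using that sub hyperedgesD(2) card.infinite by fastforce
  ultimately have "card (\<Union>M) = sum card M" by (simp add: card_Union_disjoint)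
  also have "\<dots> = (\<Sum>e\<in>M. 3)" using sub hyperedgesD(2) by (intro sum.cong) blast+
  also have "\<dots> = 3 * card M" by simp
  finally show ?thesis .
qed

lemma Union_matching_subset: "M \<in> matchings n \<Longrightarrow> \<Union>M \<subseteq> M_carrier n"
  by (intro Union_least hyperedgesD(1) matching_hyperedge)

lemma card_matching_le:
  assumes "M \<in> matchings n"
  shows "card M \<le> n + n div 3"
proof -
  have "card (\<Union>M) \<le> card (M_carrier n)"
    by (rule card_mono[OF finite_M_carrier Union_matching_subset[OF assms]])
  then have "3 * card M \<le> 4 * n" by (simp only: card_Union_matching[OF assms] card_M_carrier)
  then show ?thesis by linarith
qed

lemma matchings_Un:
  assumes M1: "M1 \<in> matchings n" and M2: "M2 \<in> matchings n" and "\<Union>M1 \<inter> \<Union>M2 = {}"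
  shows "M1 \<union> M2 \<in> matchings n" "card (M1 \<union> M2) = card M1 + card M2"
proof -
  have cross: "e \<inter> f = {}" "f \<inter> e = {}" if "e \<in> M1" "f \<in> M2" for e f
    using that assms(3) Union_upper[of e M1] Union_upper[of f M2] by blast+
  show "M1 \<union> M2 \<in> matchings n"
  proof (rule matchingsI)
    show "M1 \<union> M2 \<subseteq> hyperedges n"
      using matching_hyperedge[OF M1] matching_hyperedge[OF M2] by blast
    fix e f assume "e \<in> M1 \<union> M2" "f \<in> M1 \<union> M2" "e \<noteq> f"
    then show "e \<inter> f = {}"
      using matching_disjoint[OF M1] matching_disjoint[OF M2] cross by blast
  qed
  have "M1 \<inter> M2 = {}"
  proof (intro equals0I)
    fix e assume e: "e \<in> M1 \<inter> M2"
    then have "e = {}" using cross(1)[of e e] by simp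
    moreover have "card e = 3" using e hyperedgesD(2)[OF matching_hyperedge[OF M1]] by blast
    ultimately show False by simp
  qed
  then show "card (M1 \<union> M2) = card M1 + card M2"
    using M1 M2 by (simp add: card_Un_disjoint finite_matching)
qed

lemma matching_in_assoc_set:
  assumes "finite S" "S \<subseteq> M_carrier n" "assoc_on n S"
  shows "\<exists>M \<in> matchings n. card M = card S div 3 \<and> \<Union>M \<subseteq> S"
  using assms
proof (induction "card S" arbitrary: S rule: less_induct)
  case less
  show ?case
  proof (cases "card S < 3")
    case True
    have "{} \<in> matchings n" by (rule matchingsI) simp_all
    then show ?thesis using True by (intro bexI[of _ "{}"]) simp_all
  next
    case False
    then have "3 \<le> card S" by simp
    then obtain e where e: "e \<subseteq> S" "card e = 3" by (rule obtain_subset_with_card_n)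
    have "e \<in> hyperedges n"
      using e less.prems(2) assoc_on_subset[OF less.prems(3) e(1)] by (intro hyperedgesI) auto
    then have single: "{e} \<in> matchings n" by (intro matchingsI) simp_all
    have card_rest: "card (S - e) = card S - 3"
      using e less.prems(1) by (simp add: card_Diff_subset finite_subset)
    have "card (S - e) < card S" using False card_rest by simp
    moreover have "finite (S - e)" "S - e \<subseteq> M_carrier n" using less.prems(1,2) by auto
    ultimately obtain M where M: "M \<in> matchings n" "card M = card (S - e) div 3" "\<Union>M \<subseteq> S - e"
      using less.hyps assoc_on_subset[OF less.prems(3) Diff_subset] by meson
    have disj: "\<Union>{e} \<inter> \<Union>M = {}" using M(3) by blast
    have "card ({e} \<union> M) = card S div 3"
      using matchings_Un(2)[OF single M(1) disj] M(2) card_rest \<open>3 \<le> card S\<close>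
      by (simp add: le_div_geq)
    moreover have "\<Union>({e} \<union> M) \<subseteq> S" using e(1) M(3) by blast
    ultimately show ?thesis using matchings_Un(1)[OF single M(1) disj] by blast
  qed
qed

lemma matching_in_three_assoc_sets:
  assumes "finite A" "finite B" "finite C"
    and "A \<subseteq> M_carrier n" "B \<subseteq> M_carrier n" "C \<subseteq> M_carrier n"
    and "assoc_on n A" "assoc_on n B" "assoc_on n C"
    and "A \<inter> B = {}" "A \<inter> C = {}" "B \<inter> C = {}"
  shows "\<exists>M \<in> matchings n. card M = card A div 3 + card B div 3 + card C div 3"
proof -
  obtain MA where MA: "MA \<in> matchings n" "card MA = card A div 3" "\<Union>MA \<subseteq> A"
    using matching_in_assoc_set[of A n] assms by blast
  obtain MB where MB: "MB \<in> matchings n" "card MB = card B div 3" "\<Union>MB \<subseteq> B"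
    using matching_in_assoc_set[of B n] assms by blast
  obtain MC where MC: "MC \<in> matchings n" "card MC = card C div 3" "\<Union>MC \<subseteq> C"
    using matching_in_assoc_set[of C n] assms by blast
  have AB: "\<Union>MA \<inter> \<Union>MB = {}" using MA(3) MB(3) assms(10) by blast
  have ABC: "\<Union>(MA \<union> MB) \<inter> \<Union>MC = {}" using MA(3) MB(3) MC(3) assms(11,12) by blast
  show ?thesis
    using matchings_Un[OF matchings_Un(1)[OF MA(1) MB(1) AB] MC(1) ABC]
      matchings_Un(2)[OF MA(1) MB(1) AB] MA(2) MB(2) MC(2) by auto
qed

definition layer :: "nat \<Rightarrow> nat \<Rightarrow> nat set \<Rightarrow> (dih \<times> nat) set" where
  "layer s a I = (\<lambda>i. ((i, s), a)) ` I"

lemma card_layer_Un: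
  assumes "(s, a) \<noteq> (t, b)" "finite I" "finite J"
  shows "card (layer s a I \<union> layer t b J) = card I + card J"
proof -
  have "card (layer s a I \<union> layer t b J) = card (layer s a I) + card (layer t b J)"
    using assms unfolding layer_def by (intro card_Un_disjoint) auto
  also have "\<dots> = card I + card J" unfolding layer_def by (simp add: card_image inj_on_def)
  finally show ?thesis .
qed

lemma three_floors_split:
  obtains p q :: nat where "p + q \<le> 2"
    "(n + p) div 3 + (n + q) div 3 + (2 * n - (p + q)) div 3 = n + n div 3"
proof -
  obtain m r where "n = 3 * m + r" "r < 3"
    by (metis div_mod_decomp mult.commute mod_less_divisor zero_less_numeral)
  then consider "n = 3 * m" | "n = 3 * m + 1" | "n = 3 * m + 2" by linarith
  then show thesis
  proof cases
    case 1
    then show thesis by (intro that[of 0 0]) simp_all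
  next
    case 2
    then show thesis by (intro that[of 2 0]) simp_all
  next
    case 3
    then show thesis by (intro that[of 1 1]) simp_all
  qed
qed

lemma exists_matching_of_max_size:
  assumes "n \<ge> 3"
  shows "\<exists>M \<in> matchings n. card M = n + n div 3"
proof -
  obtain p q where pq: "p + q \<le> 2"
    "(n + p) div 3 + (n + q) div 3 + (2 * n - (p + q)) div 3 = n + n div 3"
    by (rule three_floors_split)
  define A where "A = layer 0 1 {..<n} \<union> layer 0 0 {..<p}"
  define B where "B = layer 1 1 {..<n} \<union> layer 0 0 {p..<p + q}"
  define C where "C = layer 1 0 {..<n} \<union> layer 0 0 {p + q..<n}"
  have n0: "n > 0" using assms by simp
  have A: "A \<subseteq> {x \<in> M_carrier n. snd (fst x) = 0}"
    using pq(1) assms unfolding A_def layer_def M_carrier_def dih_carrier_def by auto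
  have B: "B \<subseteq> {x \<in> M_carrier n. snd (fst x) = snd x}"
    using pq(1) assms unfolding B_def layer_def M_carrier_def dih_carrier_def by auto
  have C: "C \<subseteq> {x \<in> M_carrier n. snd x = 0}"
    unfolding C_def layer_def M_carrier_def dih_carrier_def by auto
  have "finite A" "finite B" "finite C" unfolding A_def B_def C_def layer_def by simp_all
  moreover have "A \<subseteq> M_carrier n" "B \<subseteq> M_carrier n" "C \<subseteq> M_carrier n"
    using A B C by auto
  moreover have "assoc_on n A" "assoc_on n B" "assoc_on n C"
    using assoc_on_subset[OF assoc_on_rotations[OF n0] A]
      assoc_on_subset[OF assoc_on_reflection_iff_alpha[OF n0] B]
      assoc_on_subset[OF assoc_on_alpha_zero[OF n0] C] by simp_all
  moreover have "A \<inter> B = {}" "A \<inter> C = {}" "B \<inter> C = {}"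
    unfolding A_def B_def C_def layer_def by auto
  ultimately obtain M where "M \<in> matchings n" "card M = card A div 3 + card B div 3 + card C div 3"
    by (metis matching_in_three_assoc_sets)
  moreover have "card A = n + p" "card B = n + q" "card C = 2 * n - (p + q)"
    using pq(1) assms unfolding A_def B_def C_def by (simp_all add: card_layer_Un)
  ultimately show ?thesis using pq(2) by auto
qed

lemma num_matchings_neq_0_iff: "num_matchings n k \<noteq> 0 \<longleftrightarrow> (\<exists>M \<in> matchings n. card M = k)"
  unfolding num_matchings_def using finite_matchings[of n] by auto

lemma matching_poly_by_size:
  assumes "\<And>M. M \<in> matchings n \<Longrightarrow> card M \<le> K"
  shows "matching_poly n w1 w2 =
           (\<Sum>k = 0..K. of_nat (num_matchings n k) * w1 ^ (4 * n - 3 * k) * w2 ^ k)"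
proof -
  let ?h = "\<lambda>M. w1 ^ (4 * n - 3 * card M) * w2 ^ card M"
  have "matching_poly n w1 w2 = sum ?h (matchings n)"
    unfolding matching_poly_def card_M_carrier ..
  also have "\<dots> = (\<Sum>k = 0..K. sum ?h {M \<in> matchings n. card M = k})"
    using assms finite_matchings by (intro sum.group[symmetric]) auto
  also have "\<dots> = (\<Sum>k = 0..K. of_nat (num_matchings n k) * w1 ^ (4 * n - 3 * k) * w2 ^ k)"
  proof (rule sum.cong[OF refl])
    fix k
    have "sum ?h {M \<in> matchings n. card M = k} =
            (\<Sum>M \<in> {M \<in> matchings n. card M = k}. w1 ^ (4 * n - 3 * k) * w2 ^ k)"
      by (rule sum.cong) auto
    then show "sum ?h {M \<in> matchings n. card M = k} =
                 of_nat (num_matchings n k) * w1 ^ (4 * n - 3 * k) * w2 ^ k"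
      unfolding num_matchings_def by (simp add: mult.assoc)
  qed
  finally show ?thesis .
qed

theorem mainTheorem11:
  fixes n :: nat
  assumes "n \<ge> 3"
  shows "(\<forall>w1 w2 :: 'a::comm_ring_1. matching_poly n w1 w2 =
            (\<Sum>k = 0..n + n div 3. of_nat (num_matchings n k) * w1 ^ (4 * n - 3 * k) * w2 ^ k))
         \<and> num_matchings n (n + n div 3) \<noteq> 0"
proof (intro conjI allI)
  fix w1 w2 :: 'a
  show "matching_poly n w1 w2 =
          (\<Sum>k = 0..n + n div 3. of_nat (num_matchings n k) * w1 ^ (4 * n - 3 * k) * w2 ^ k)"
    by (rule matching_poly_by_size[OF card_matching_le])
next
  show "num_matchings n (n + n div 3) \<noteq> 0"
    using exists_matching_of_max_size[OF assms] by (simp only: num_matchings_neq_0_iff)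
qed

end
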